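(* For $s\in\mathbb{N}$ let $\mathcal{F}_s$ be the set of binary cubic forms $f=(a,b,c,d)$ over $\mathbb{F}_q[t]$ such that $\deg(D(f))=s$, $\deg(a)\le s/4$, $\deg(b)\le s/4$, $\deg(ad)\le s/2$, $\deg(bc)\le s/2$, and $\mathrm{sgn}(a)\in S$. Then, as $s\to\infty$, $\#\mathcal{F}_s\le \frac{q^3}{32}s^2q^s+O(sq^s)$ if $s$ is odd, and $\#\mathcal{F}_s\le\frac{q^4}{32}s^2q^s+O(sq^s)$ if $s$ is even.
   Context: $q$ is a prime power with $\gcd(q,6)=1$; $\mathrm{sgn}(H)$ is the leading coefficient of $H\in\mathbb{F}_q[t]$. A binary cubic form $(a,b,c,d)$ is $ax^3+bx^2y+cxy^2+dy^3$ over $\mathbb{F}_q[t]$ with discriminant $D(f)=18abcd+b^2c^2-4ac^3-4b^3d-27a^2d^2$, assumed irreducible (so $ad\neq0$). Fix a primitive root $h$ of $\mathbb{F}_q^*$ and $S=\{h^i:0\le i\le(q-3)/2\}$. *)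

theory Defs
  imports "HOL-Computational_Algebra.Computational_Algebra"
begin

text \<open>Binary cubic forms a x^3 + b x^2 y + c x y^2 + d y^3 over F_q[t],
  represented as quadruples (a,b,c,d) of polynomials.\<close>

type_synonym 'a bcf = "'a poly \<times> 'a poly \<times> 'a poly \<times> 'a poly"

definition bcf_disc :: "'a::field bcf \<Rightarrow> 'a poly" where
  "bcf_disc f = (case f of (a,b,c,d) \<Rightarrow>
     18*a*b*c*d + b^2*c^2 - 4*a*c^3 - 4*b^3*d - 27*a^2*d^2)"

text \<open>Irreducibility of the binary cubic form over the field F_q(t):
  a \<noteq> 0 (otherwise y divides the form), d \<noteq> 0, and the dehomogenisation
  a X^3 + b X^2 + c X + d is irreducible in F_q(t)[X].\<close>

definition bcf_irreducible :: "'a::field bcf \<Rightarrow> bool" where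
  "bcf_irreducible f = (case f of (a,b,c,d) \<Rightarrow>
     a \<noteq> 0 \<and> d \<noteq> 0 \<and> irreducible (map_poly to_fract [:d, c, b, a:]))"

definition primitive_root :: "'a::field \<Rightarrow> bool" where
  "primitive_root h \<longleftrightarrow> h \<noteq> 0 \<and> (\<forall>x. x \<noteq> 0 \<longrightarrow> (\<exists>k::nat. x = h ^ k))"

definition fsize :: "'a::finite itself \<Rightarrow> nat" where
  "fsize _ = card (UNIV :: 'a set)"

definition sgn_set :: "'a::{field,finite} \<Rightarrow> 'a set" where
  "sgn_set h = {h ^ i | i. i \<le> (card (UNIV :: 'a set) - 3) div 2}"

definition Fs :: "'a::{field,finite} \<Rightarrow> nat \<Rightarrow> 'a bcf set" where
  "Fs h s = {f. case f of (a,b,c,d) \<Rightarrow>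
      bcf_irreducible f \<and> bcf_disc f \<noteq> 0 \<and> degree (bcf_disc f) = s \<and>
      real (degree a) \<le> real s / 4 \<and> real (degree b) \<le> real s / 4 \<and>
      real (degree (a*d)) \<le> real s / 2 \<and> real (degree (b*c)) \<le> real s / 2 \<and>
      lead_coeff a \<in> sgn_set h}"

end

theory Submission
  imports Defs "HOL-Number_Theory.Residues" "HOL-Library.Cardinality"
begin

(* Write q = #F_q, t = s div 4, m = s div 2, u = s div 3 and S = sgn_set h.  A form (a,b,c,d) in
   F_s has deg a = i <= t, deg b = j <= t and deg d <= m - i.  If b <> 0, also deg c <= m - j;
   if b = 0, the discriminant is -(4ac^3 + 27a^2d^2), whose degree would be deg a + 3 deg c > s
   unless deg c <= u.  So F_s is covered by the "boxes" of forms with prescribed degree bounds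
   (i, j, m - j, m - i), i,j <= t, and (i, 0, u, m - i), i <= t.  A box with bounds (i,j,k,l)
   contains at most #S * q^(i+j+k+l+3) forms, which gives
     #F_s <= (t+1)^2 #S q^(2m+3) + (t+1) #S q^(m+u+3).
   Since 2 #S <= q, 4t <= s, 2m + 3 = s + 2 or s + 3 and m + u <= s, this is at most
   q^3/32 s^2 q^s resp. q^4/32 s^2 q^s plus 2 q^4 s q^s. *)

(* HOL-Number_Theory.Residues (needed for CHAR_dvd_CARD) brings HOL-Algebra's univariate
   polynomial coefficient function into scope; keep the name coeff for HOL polynomials. *)
hide_const (open) UnivPoly.coeff

(* In a finite ring the characteristic divides the cardinality, so integers coprime to the
   cardinality are nonzero. *)
lemma of_nat_nonzero_if_coprime_card:
  assumes "coprime CARD('a::{ring_1,finite}) n"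
  shows "of_nat n \<noteq> (0::'a)"
proof
  assume "of_nat n = (0::'a)"
  hence "CHAR('a) dvd n" by (simp only: of_nat_eq_0_iff_char_dvd)
  moreover have "CHAR('a) dvd CARD('a)" by (rule CHAR_dvd_CARD)
  ultimately have "is_unit (CHAR('a))" using assms by (meson coprime_common_divisor)
  thus False by simp
qed

(* The hypothesis gcd(q,6) = 1 is used only through 4 <> 0 in F_q. *)
lemma four_nonzero_if_coprime_6:
  assumes "coprime CARD('a::{field,finite}) (6::nat)"
  shows "(4::'a) \<noteq> 0"
proof -
  have "coprime CARD('a) (2 :: nat)"
    using assms coprime_mult_right_iff[of "CARD('a)" 2 3] by simp
  hence "of_nat 2 \<noteq> (0::'a)" by (rule of_nat_nonzero_if_coprime_card)
  hence two: "(2::'a) \<noteq> 0" by simp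
  have "(4::'a) = 2 * 2" by simp
  thus ?thesis using two mult_eq_0_iff by metis
qed

(* For b = 0 the discriminant is -(4ac^3 + 27(ad)^2); when ad is small the first term dominates. *)
lemma degree_disc_b0:
  fixes a c d :: "'a::field poly"
  assumes "(4::'a) \<noteq> 0" and "a \<noteq> 0" "c \<noteq> 0"
    and small: "2 * degree (a * d) < degree a + 3 * degree c"
  shows "degree (bcf_disc (a, 0, c, d)) = degree a + 3 * degree c"
proof -
  have disc: "bcf_disc (a, 0, c, d) = - (4 * a * c ^ 3 + 27 * (a * d) ^ 2)"
    by (simp add: bcf_disc_def power2_eq_square algebra_simps)
  have lead: "degree (4 * a * c ^ 3) = degree a + 3 * degree c"
    using assms by (simp add: numeral_poly degree_mult_eq degree_power_eq)
  have "degree (27 * (a * d) ^ 2) \<le> 2 * degree (a * d)"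
    by (metis degree_mult_le degree_numeral degree_power_le add_0 mult.commute order_trans)
  hence "degree (27 * (a * d) ^ 2) < degree (4 * a * c ^ 3)" using lead small by linarith
  hence "degree (4 * a * c ^ 3 + 27 * (a * d) ^ 2) = degree (4 * a * c ^ 3)"
    by (rule degree_add_eq_left)
  thus ?thesis using lead by (simp only: disc degree_minus)
qed

(* Polynomials of degree <= n whose k-th coefficient lies in T k are determined by their first
   n + 1 coefficients, so there are at most prod_k #(T k) of them. *)
lemma card_polys_coeffwise:
  fixes T :: "nat \<Rightarrow> 'a::{zero,finite} set" and n :: nat
  defines "P \<equiv> {p::'a poly. degree p \<le> n \<and> (\<forall>k\<le>n. coeff p k \<in> T k)}"
  shows "finite P" and "card P \<le> (\<Prod>k\<le>n. card (T k))"
proof -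
  define coeffs_upto where "coeffs_upto p = restrict (coeff p) {..n}" for p :: "'a poly"
  have inj: "inj_on coeffs_upto P"
  proof (rule inj_onI)
    fix p r assume p: "p \<in> P" and r: "r \<in> P" and eq: "coeffs_upto p = coeffs_upto r"
    show "p = r"
    proof (rule poly_eqI)
      fix k show "coeff p k = coeff r k"
      proof (cases "k \<le> n")
        case True then show ?thesis using fun_cong[OF eq, of k] by (simp add: coeffs_upto_def)
      next
        case False then show ?thesis using p r by (simp add: P_def coeff_eq_0)
      qed
    qed
  qed
  have sub: "coeffs_upto ` P \<subseteq> PiE {..n} T" by (auto simp: coeffs_upto_def P_def split: if_splits)
  have fin: "finite (PiE {..n} T)" by (intro finite_PiE) auto
  show "finite P" using finite_subset[OF sub fin] inj finite_image_iff by blast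
  have "card P = card (coeffs_upto ` P)" using inj by (simp add: card_image)
  also have "\<dots> \<le> card (PiE {..n} T)" using sub fin by (rule card_mono[rotated])
  also have "\<dots> = (\<Prod>k\<le>n. card (T k))" by (simp add: card_PiE)
  finally show "card P \<le> (\<Prod>k\<le>n. card (T k))" .
qed

lemma card_polys_degree_le:
  "finite {p::'a::{zero,finite} poly. degree p \<le> n}"
  "card {p::'a::{zero,finite} poly. degree p \<le> n} \<le> CARD('a) ^ Suc n"
  using card_polys_coeffwise[of n "\<lambda>_. UNIV"] by simp_all

lemma card_polys_lead_coeff_in:
  fixes S :: "'a::{zero,finite} set"
  shows "finite {p::'a poly. degree p = n \<and> lead_coeff p \<in> S}"
    and "card {p::'a poly. degree p = n \<and> lead_coeff p \<in> S} \<le> card S * CARD('a) ^ n"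
proof -
  define T where "T k = (if k = n then S else UNIV)" for k
  let ?P = "{p::'a poly. degree p \<le> n \<and> (\<forall>k\<le>n. coeff p k \<in> T k)}"
  have sub: "{p::'a poly. degree p = n \<and> lead_coeff p \<in> S} \<subseteq> ?P"
    by (auto simp: T_def)
  have "(\<Prod>k\<le>n. card (T k)) = (\<Prod>k<n. card (T k)) * card (T n)"
    by (simp add: lessThan_Suc_atMost[symmetric])
  also have "\<dots> = card S * CARD('a) ^ n" by (simp add: T_def)
  finally have "card ?P \<le> card S * CARD('a) ^ n"
    using card_polys_coeffwise(2)[of n T] by simp
  with sub show "finite {p::'a poly. degree p = n \<and> lead_coeff p \<in> S}"
    and "card {p::'a poly. degree p = n \<and> lead_coeff p \<in> S} \<le> card S * CARD('a) ^ n"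
    using card_polys_coeffwise(1)[of n T] by (auto intro: finite_subset card_mono order_trans)
qed

definition cubic_box :: "'a::zero set \<Rightarrow> nat \<Rightarrow> nat \<Rightarrow> nat \<Rightarrow> nat \<Rightarrow> 'a bcf set" where
  "cubic_box S i j k l =
     {a. degree a = i \<and> lead_coeff a \<in> S} \<times> {b. degree b \<le> j} \<times> {c. degree c \<le> k} \<times> {d. degree d \<le> l}"

lemma card_cubic_box:
  fixes S :: "'a::{zero,finite} set"
  shows "finite (cubic_box S i j k l)"
    and "card (cubic_box S i j k l) \<le> card S * CARD('a) ^ (i + j + k + l + 3)"
proof -
  show "finite (cubic_box S i j k l)"
    by (simp add: cubic_box_def card_polys_degree_le(1) card_polys_lead_coeff_in(1))
  have "card (cubic_box S i j k l) \<le> (card S * CARD('a) ^ i) *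
      (CARD('a) ^ Suc j * (CARD('a) ^ Suc k * CARD('a) ^ Suc l))"
    unfolding cubic_box_def card_cartesian_product
    by (intro mult_le_mono card_polys_degree_le(2) card_polys_lead_coeff_in(2))
  also have "\<dots> = card S * CARD('a) ^ (i + j + k + l + 3)"
    by (simp add: power_add power3_eq_cube mult_ac)
  finally show "card (cubic_box S i j k l) \<le> card S * CARD('a) ^ (i + j + k + l + 3)" .
qed

lemma degree_cofactor_le:
  fixes a d :: "'a::idom poly"
  assumes "a \<noteq> 0" and "degree (a * d) \<le> n"
  shows "degree d \<le> n - degree a"
  using assms by (cases "d = 0") (auto simp: degree_mult_eq)

lemma Fs_memberD:
  assumes "(a, b, c, d) \<in> Fs h s"
  shows "a \<noteq> 0" and "lead_coeff a \<in> sgn_set h" and "degree (bcf_disc (a, b, c, d)) = s"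
    and "4 * degree a \<le> s" and "4 * degree b \<le> s"
    and "2 * degree (a * d) \<le> s" and "2 * degree (b * c) \<le> s"
  using assms by (auto simp: Fs_def bcf_irreducible_def)

lemma Fs_subset_boxes:
  fixes h :: "'a::{field,finite}" and s :: nat
  assumes four: "(4::'a) \<noteq> 0"
  defines "t \<equiv> s div 4" and "m \<equiv> s div 2" and "u \<equiv> s div 3"
  shows "Fs h s \<subseteq> (\<Union>i\<le>t. \<Union>j\<le>t. cubic_box (sgn_set h) i j (m - j) (m - i))
                   \<union> (\<Union>i\<le>t. cubic_box (sgn_set h) i 0 u (m - i))"
proof
  fix f assume f: "f \<in> Fs h s"
  obtain a b c d where f_eq: "f = (a, b, c, d)" by (cases f) auto
  note facts = Fs_memberD[OF f[unfolded f_eq]]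
  define i where "i = degree a"
  have "i \<le> t" using facts(4) unfolding i_def t_def by presburger
  have "degree (a * d) \<le> m" using facts(6) unfolding m_def by presburger
  hence "degree d \<le> m - i" unfolding i_def using facts(1) by (rule degree_cofactor_le[rotated])
  show "f \<in> (\<Union>i\<le>t. \<Union>j\<le>t. cubic_box (sgn_set h) i j (m - j) (m - i))
           \<union> (\<Union>i\<le>t. cubic_box (sgn_set h) i 0 u (m - i))"
  proof (cases "b = 0")
    case False
    define j where "j = degree b"
    have "j \<le> t" using facts(5) unfolding j_def t_def by presburger
    have "degree (b * c) \<le> m" using facts(7) unfolding m_def by presburger
    hence "degree c \<le> m - j" unfolding j_def using False by (rule degree_cofactor_le[rotated])
    hence "f \<in> cubic_box (sgn_set h) i j (m - j) (m - i)"
      using facts(2) \<open>degree d \<le> m - i\<close> by (simp add: f_eq cubic_box_def i_def j_def)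
    thus ?thesis using \<open>i \<le> t\<close> \<open>j \<le> t\<close> by blast
  next
    case True
    (* Otherwise -4ac^3 would dominate the discriminant, whose degree would exceed s. *)
    have "3 * degree c \<le> s"
    proof (rule ccontr)
      assume big: "\<not> 3 * degree c \<le> s"
      hence "c \<noteq> 0" by auto
      have "2 * degree (a * d) < degree a + 3 * degree c" using facts(6) big by linarith
      hence "degree (bcf_disc (a, 0, c, d)) = degree a + 3 * degree c"
        using four facts(1) \<open>c \<noteq> 0\<close> by (intro degree_disc_b0)
      thus False using facts(3) big True by simp
    qed
    hence "degree c \<le> u" unfolding u_def by presburger
    hence "f \<in> cubic_box (sgn_set h) i 0 u (m - i)"
      using facts(2) True \<open>degree d \<le> m - i\<close> by (simp add: f_eq cubic_box_def i_def)
    thus ?thesis using \<open>i \<le> t\<close> by blast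
  qed
qed

lemma card_Fs_le:
  fixes h :: "'a::{field,finite}" and s :: nat
  assumes four: "(4::'a) \<noteq> 0"
  defines "t \<equiv> s div 4" and "m \<equiv> s div 2" and "u \<equiv> s div 3"
  shows "card (Fs h s) \<le> (t + 1) ^ 2 * card (sgn_set h) * CARD('a) ^ (2 * m + 3)
                        + (t + 1) * card (sgn_set h) * CARD('a) ^ (m + u + 3)"
proof -
  let ?S = "sgn_set h"
  let ?U1 = "\<Union>i\<le>t. \<Union>j\<le>t. cubic_box ?S i j (m - j) (m - i)"
  let ?U2 = "\<Union>i\<le>t. cubic_box ?S i 0 u (m - i)"
  have "t \<le> m" unfolding t_def m_def by presburger
  have U1: "card ?U1 \<le> (t + 1) ^ 2 * card ?S * CARD('a) ^ (2 * m + 3)"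
  proof -
    have box: "card (cubic_box ?S i j (m - j) (m - i)) \<le> card ?S * CARD('a) ^ (2 * m + 3)"
      if "i \<le> t" "j \<le> t" for i j
    proof -
      have "i + j + (m - j) + (m - i) + 3 = 2 * m + 3" using that \<open>t \<le> m\<close> by simp
      thus ?thesis using card_cubic_box(2)[of ?S i j "m - j" "m - i"] by simp
    qed
    have "card ?U1 \<le> (\<Sum>i\<le>t. \<Sum>j\<le>t. card (cubic_box ?S i j (m - j) (m - i)))"
      by (intro card_UN_le[THEN order_trans] sum_mono card_UN_le) simp_all
    also have "\<dots> \<le> (\<Sum>i\<le>t. \<Sum>j\<le>t. card ?S * CARD('a) ^ (2 * m + 3))"
      using box by (intro sum_mono) simp
    also have "\<dots> = (t + 1) ^ 2 * card ?S * CARD('a) ^ (2 * m + 3)"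
      by (simp add: power2_eq_square algebra_simps)
    finally show ?thesis .
  qed
  have U2: "card ?U2 \<le> (t + 1) * card ?S * CARD('a) ^ (m + u + 3)"
  proof -
    have box: "card (cubic_box ?S i 0 u (m - i)) \<le> card ?S * CARD('a) ^ (m + u + 3)"
      if "i \<le> t" for i
    proof -
      have "i + 0 + u + (m - i) + 3 = m + u + 3" using that \<open>t \<le> m\<close> by simp
      thus ?thesis using card_cubic_box(2)[of ?S i 0 u "m - i"] by (simp add: add.commute)
    qed
    have "card ?U2 \<le> (\<Sum>i\<le>t. card (cubic_box ?S i 0 u (m - i)))"
      by (rule card_UN_le) simp
    also have "\<dots> \<le> (\<Sum>i\<le>t. card ?S * CARD('a) ^ (m + u + 3))"
      using box by (intro sum_mono) simp
    also have "\<dots> = (t + 1) * card ?S * CARD('a) ^ (m + u + 3)"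
      by (simp add: algebra_simps)
    finally show ?thesis .
  qed
  have "card (Fs h s) \<le> card (?U1 \<union> ?U2)"
  proof (rule card_mono)
    show "finite (?U1 \<union> ?U2)" by (simp add: card_cubic_box(1))
    show "Fs h s \<subseteq> ?U1 \<union> ?U2"
      using Fs_subset_boxes[OF four, of h s] by (simp add: t_def m_def u_def)
  qed
  also have "\<dots> \<le> card ?U1 + card ?U2" by (rule card_Un_le)
  finally show ?thesis using U1 U2 by linarith
qed

lemma card_sgn_set_le:
  fixes h :: "'a::{field,finite}"
  shows "2 * card (sgn_set h) \<le> CARD('a)"
proof -
  have two: "CARD('a) \<ge> 2"
    using card_mono[of "UNIV :: 'a set" "{0, 1}"] by simp
  have "sgn_set h = (\<lambda>i. h ^ i) ` {..(CARD('a) - 3) div 2}"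
    unfolding sgn_set_def by auto
  hence "card (sgn_set h) \<le> (CARD('a) - 3) div 2 + 1"
    using card_image_le[of "{..(CARD('a) - 3) div 2}" "\<lambda>i. h ^ i"] by simp
  thus ?thesis using two by linarith
qed

lemma prefactor_bounds:
  fixes t s \<sigma> q :: real
  assumes "0 \<le> t" "4 * t \<le> s" "1 \<le> s" "0 \<le> \<sigma>" "2 * \<sigma> \<le> q"
  shows "(t + 1) ^ 2 * \<sigma> \<le> q / 32 * s ^ 2 + q * s"
    and "(t + 1) * \<sigma> \<le> q * s"
proof -
  have "(t + 1) ^ 2 \<le> (s / 4 + 1) ^ 2" using assms by (intro power_mono) auto
  also have "\<dots> \<le> s ^ 2 / 16 + 2 * s" using assms by (simp add: power2_eq_square field_simps)
  finally have "(t + 1) ^ 2 * \<sigma> \<le> (s ^ 2 / 16 + 2 * s) * (q / 2)"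
    using assms by (intro mult_mono) auto
  thus "(t + 1) ^ 2 * \<sigma> \<le> q / 32 * s ^ 2 + q * s" by (simp add: field_simps)
  have "(t + 1) * \<sigma> \<le> (2 * s) * (q / 2)" using assms by (intro mult_mono) auto
  thus "(t + 1) * \<sigma> \<le> q * s" by (simp add: mult.commute)
qed

lemma card_Fs_explicit_bound:
  fixes h :: "'a::{field,finite}" and s :: nat
  assumes four: "(4::'a) \<noteq> 0" and "1 \<le> s"
  defines "q \<equiv> real CARD('a)"
  shows "real (card (Fs h s)) \<le> (if odd s then q ^ 3 / 32 else q ^ 4 / 32) * real s ^ 2 * q ^ s
                                  + 2 * q ^ 4 * real s * q ^ s"
proof -
  define t m u where "t = s div 4" and "m = s div 2" and "u = s div 3"
  define e :: nat where "e = (if odd s then 2 else 3)"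
  define \<sigma> where "\<sigma> = real (card (sgn_set h))"
  have q1: "1 \<le> q" unfolding q_def using card_mono[of "UNIV :: 'a set" "{0, 1}"] by simp
  have prefactors: "(real t + 1) ^ 2 * \<sigma> \<le> q / 32 * real s ^ 2 + q * real s"
    "(real t + 1) * \<sigma> \<le> q * real s"
    using card_sgn_set_le[of h] \<open>1 \<le> s\<close>
    by (intro prefactor_bounds; simp add: t_def \<sigma>_def q_def)+
  have "2 * m + 3 = e + s" unfolding e_def m_def by presburger
  hence main_power: "q ^ (2 * m + 3) = q ^ e * q ^ s" by (simp add: power_add)
  have error_power: "q ^ (m + u + 3) \<le> q ^ 3 * q ^ s"
    unfolding power_add[symmetric] using q1 by (intro power_increasing) (auto simp: m_def u_def)
  have "real (card (Fs h s)) \<le> (real t + 1) ^ 2 * \<sigma> * q ^ (2 * m + 3)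
                                 + (real t + 1) * \<sigma> * q ^ (m + u + 3)"
    using of_nat_mono[OF card_Fs_le[OF four, of h s], where 'a = real]
    unfolding t_def m_def u_def \<sigma>_def q_def by (simp add: algebra_simps)
  also have "\<dots> \<le> (q / 32 * real s ^ 2 + q * real s) * (q ^ e * q ^ s)
                  + (q * real s) * (q ^ 3 * q ^ s)"
    unfolding main_power using q1
    by (intro add_mono mult_mono[OF prefactors(1)] mult_mono[OF prefactors(2) error_power])
      (auto simp: \<sigma>_def)
  also have "\<dots> = q ^ Suc e / 32 * real s ^ 2 * q ^ s + q ^ Suc e * real s * q ^ s
                  + q ^ 4 * real s * q ^ s"
    by (simp add: algebra_simps power3_eq_cube power4_eq_xxxx)
  also have "\<dots> \<le> q ^ Suc e / 32 * real s ^ 2 * q ^ s + 2 * q ^ 4 * real s * q ^ s"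
  proof -
    have "q ^ Suc e \<le> q ^ 4" using q1 by (intro power_increasing) (simp_all add: e_def)
    hence "q ^ Suc e * real s * q ^ s \<le> q ^ 4 * real s * q ^ s"
      using q1 by (intro mult_right_mono) auto
    thus ?thesis by linarith
  qed
  finally show ?thesis
    by (cases "odd s") (simp_all add: e_def del: power_Suc)
qed

theorem mainTheorem14:
  fixes h :: "'a::{field,finite}"
  defines "q \<equiv> fsize TYPE('a)"
  assumes "coprime q (6::nat)"
    and "primitive_root h"
  shows "\<exists>C::real. \<forall>\<^sub>F s in sequentially.
     real (card (Fs h s)) \<le>
       (if odd s then real q ^ 3 / 32 else real q ^ 4 / 32)
         * real s ^ 2 * real q ^ s + C * real s * real q ^ s"
proof -
  have q: "q = CARD('a)" by (simp add: q_def fsize_def)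
  have four: "(4::'a) \<noteq> 0" using assms(2) unfolding q by (rule four_nonzero_if_coprime_6)
  have "\<forall>\<^sub>F s in sequentially. real (card (Fs h s)) \<le>
       (if odd s then real q ^ 3 / 32 else real q ^ 4 / 32)
         * real s ^ 2 * real q ^ s + (2 * real q ^ 4) * real s * real q ^ s"
    using card_Fs_explicit_bound[OF four] unfolding q by (intro eventually_sequentiallyI[of 1])
  thus ?thesis by blast
qed

end
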